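(* Let $M\subset\mathbb{R}^{2d}$ satisfy the standing assumptions below, let $\overline M$ be its symmetrization, $N=(\overline M)^*$ its symplectic polar, and let $H$ be the positively homogeneous function of degree one whose unit level set is $N$. Then for every $x$ in the exterior of $\overline M$, $$V(x):=2(n_+(x)-n_-(x))=-2X_H(x).$$ In particular, $V$ is homogeneous of degree zero.
   Context: Equip $\mathbb{R}^{2d}$ with the standard inner product, complex structure $J$ ($J^2=-I$, orthogonal) and symplectic form $\omega(u,v)=\langle Ju,v\rangle$; the Hamiltonian vector field of $f$ is defined by $\omega(\cdot,X_f)=df$. Standing assumptions: $M$ is a smooth closed hypersurface bounding a strictly convex domain containing the origin in its interior, and is a level set of a smooth function with positive definite Hessian. For such a hypersurface $Q$ and $q\in Q$, the Reeb vector $R_Q(q)$ is the unique vector with $\omega(v,R_Q(q))=0$ for all $v\in T_qQ$ and $\omega(q,R_Q(q))=1$; the symplectic polar is $Q^*=\{R_Q(q):q\in Q\}$. Write $a\sim b$ if $a=\lambda b$ with $\lambda>0$. For $x$ in the exterior of $M$, $n_+(x)$ and $n_-(x)$ denote the unique points of $M$ with $R_M(n_+(x))\sim x$ and $R_M(n_-(x))\sim -x$. The symmetrization $\overline M$ is the hypersurface whose support function is $\bar p(v)=p(v)+p(-v)$, where $p$ is the support function of $M$ (equivalently the boundary of the Minkowski sum of the domain bounded by $M$ and its reflection in the origin). *)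

theory Defs
  imports "HOL-Analysis.Analysis"
begin

definition omega :: "('a::euclidean_space \<Rightarrow> 'a) \<Rightarrow> 'a \<Rightarrow> 'a \<Rightarrow> real" where
  "omega J u v = (J u) \<bullet> v"

definition complex_structure :: "('a::euclidean_space \<Rightarrow> 'a) \<Rightarrow> bool" where
  "complex_structure J \<longleftrightarrow> linear J \<and> (\<forall>u. J (J u) = - u) \<and> (\<forall>u v. J u \<bullet> J v = u \<bullet> v)"

primrec Ck :: "nat \<Rightarrow> ('a::real_normed_vector \<Rightarrow> real) \<Rightarrow> bool" where
  "Ck 0 f = continuous_on UNIV f"
| "Ck (Suc k) f = ((\<forall>x. f differentiable (at x)) \<and>
                    (\<forall>v. Ck k (\<lambda>x. frechet_derivative f (at x) v)))"

definition smooth_fun :: "('a::real_normed_vector \<Rightarrow> real) \<Rightarrow> bool" where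
  "smooth_fun f \<longleftrightarrow> (\<forall>k. Ck k f)"

definition pos_def_hessian :: "('a::real_normed_vector \<Rightarrow> real) \<Rightarrow> bool" where
  "pos_def_hessian f \<longleftrightarrow> (\<forall>x v. v \<noteq> 0 \<longrightarrow>
     frechet_derivative (\<lambda>y. frechet_derivative f (at y) v) (at x) v > 0)"

definition tangent_space :: "'a::euclidean_space set \<Rightarrow> 'a \<Rightarrow> 'a set" where
  "tangent_space Q q = {v. \<exists>\<gamma> e. e > 0 \<and> \<gamma> 0 = q \<and> (\<forall>t. \<bar>t\<bar> < e \<longrightarrow> \<gamma> t \<in> Q) \<and>
                              (\<gamma> has_vector_derivative v) (at 0)}"

definition reeb :: "('a::euclidean_space \<Rightarrow> 'a) \<Rightarrow> 'a set \<Rightarrow> 'a \<Rightarrow> 'a" where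
  "reeb J Q q = (THE R. (\<forall>v \<in> tangent_space Q q. omega J v R = 0) \<and> omega J q R = 1)"

definition symp_polar :: "('a::euclidean_space \<Rightarrow> 'a) \<Rightarrow> 'a set \<Rightarrow> 'a set" where
  "symp_polar J Q = reeb J Q ` Q"

definition pos_sim :: "'a::real_vector \<Rightarrow> 'a \<Rightarrow> bool" where
  "pos_sim a b \<longleftrightarrow> (\<exists>l>0. a = l *\<^sub>R b)"

definition n_plus :: "('a::euclidean_space \<Rightarrow> 'a) \<Rightarrow> 'a set \<Rightarrow> 'a \<Rightarrow> 'a" where
  "n_plus J M x = (THE q. q \<in> M \<and> pos_sim (reeb J M q) x)"

definition n_minus :: "('a::euclidean_space \<Rightarrow> 'a) \<Rightarrow> 'a set \<Rightarrow> 'a \<Rightarrow> 'a" where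
  "n_minus J M x = (THE q. q \<in> M \<and> pos_sim (reeb J M q) (- x))"

text \<open>Symmetrization: boundary of the Minkowski sum of K and -K, where K is the
  domain bounded by M (K = convex hull of M).\<close>
definition symmetrization :: "'a::euclidean_space set \<Rightarrow> 'a set" where
  "symmetrization M = frontier {a - b | a b. a \<in> convex hull M \<and> b \<in> convex hull M}"

definition exterior :: "'a::euclidean_space set \<Rightarrow> 'a set" where
  "exterior Q = - convex hull Q"

definition ham_field :: "('a::euclidean_space \<Rightarrow> 'a) \<Rightarrow> ('a \<Rightarrow> real) \<Rightarrow> 'a \<Rightarrow> 'a" where
  "ham_field J f x = (THE X. \<forall>u. omega J u X = frechet_derivative f (at x) u)"

end

theory Submission
  imports Defs
begin

(* The support point a(w) of K in direction w, the maximiser of <., w> on K, is by strict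
   convexity of F the unique point of M at which grad F is a positive multiple of w. The Reeb
   vector of M at q is J grad F(q) / <q, grad F(q)>, so n_+(x) = a(-Jx) and n_-(x) = a(Jx).
   The symmetrization bounds the difference body K - K, whose support point in direction w is
   z(w) = a(w) - a(-w) and whose Reeb vector at z(w) is Jw / <z(w), w>. Hence the symplectic
   polar is the unit level set of y |-> h(-Jy), h(w) = <z(w), w> being the support function, and
   homogeneity gives H(y) = h(-Jy). Since z is continuous, h is differentiable with gradient z,
   so dH_x = <J z(-Jx), .> and X_H(x) = -z(-Jx) = n_-(x) - n_+(x). The tangent spaces of both
   boundaries are computed with the Minkowski gauge: radial projection onto the boundary keeps
   the velocity of a curve wherever the gauge along the curve is stationary. *)

section \<open>Derivatives along curves\<close>

lemma has_vector_derivative_inner_const: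
  assumes "(\<gamma> has_vector_derivative v) F"
  shows "((\<lambda>t. \<gamma> t \<bullet> w) has_real_derivative v \<bullet> w) F"
proof -
  have "((\<lambda>t. \<gamma> t \<bullet> w) has_derivative (\<lambda>t. (t *\<^sub>R v) \<bullet> w)) F"
    using assms unfolding has_vector_derivative_def by (rule has_derivative_inner_left)
  moreover have "(\<lambda>t. (t *\<^sub>R v) \<bullet> w) = (*) (v \<bullet> w)" by (auto simp: fun_eq_iff)
  ultimately show ?thesis unfolding has_field_derivative_def by simp
qed

lemma has_real_derivative_compose_vector:
  assumes "(h has_vector_derivative h') (at t)" "(f has_derivative f') (at (h t))"
  shows "((\<lambda>s. f (h s)) has_real_derivative f' h') (at t)"
proof -
  have "((\<lambda>s. f (h s)) has_derivative (\<lambda>s. f' (s *\<^sub>R h'))) (at t)"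
    using has_derivative_compose[OF assms(1)[unfolded has_vector_derivative_def] assms(2)] .
  moreover have "(\<lambda>s. f' (s *\<^sub>R h')) = (*) (f' h')"
    using linear_scale[OF has_derivative_linear[OF assms(2)]] by (auto simp: fun_eq_iff)
  ultimately show ?thesis unfolding has_field_derivative_def by simp
qed

lemma has_real_derivative_0_iff_flat:
  "(f has_real_derivative 0) (at 0) \<longleftrightarrow> (\<forall>\<epsilon>>0. \<forall>\<^sub>F t in at 0. \<bar>f t - f 0\<bar> \<le> \<epsilon> * \<bar>t\<bar>)"
  unfolding has_field_derivative_iff
proof
  assume lim: "((\<lambda>t. (f t - f 0) / (t - 0)) \<longlongrightarrow> 0) (at 0)"
  show "\<forall>\<epsilon>>0. \<forall>\<^sub>F t in at 0. \<bar>f t - f 0\<bar> \<le> \<epsilon> * \<bar>t\<bar>"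
  proof (intro allI impI)
    fix \<epsilon> :: real assume "\<epsilon> > 0"
    with lim have "\<forall>\<^sub>F t in at 0. \<bar>(f t - f 0) / t\<bar> < \<epsilon>"
      by (auto dest: tendstoD simp: dist_real_def)
    then show "\<forall>\<^sub>F t in at 0. \<bar>f t - f 0\<bar> \<le> \<epsilon> * \<bar>t\<bar>"
      by (rule eventually_mono) (auto simp: abs_divide divide_less_eq split: if_splits)
  qed
next
  assume flat: "\<forall>\<epsilon>>0. \<forall>\<^sub>F t in at 0. \<bar>f t - f 0\<bar> \<le> \<epsilon> * \<bar>t\<bar>"
  show "((\<lambda>t. (f t - f 0) / (t - 0)) \<longlongrightarrow> 0) (at 0)"
  proof (rule tendstoI)
    fix e :: real assume "e > 0"
    then have "\<forall>\<^sub>F t in at 0. \<bar>f t - f 0\<bar> \<le> e / 2 * \<bar>t\<bar>" using flat half_gt_zero by blast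
    moreover have "\<forall>\<^sub>F t in at 0. t \<noteq> 0" by (simp add: eventually_at_filter)
    ultimately show "\<forall>\<^sub>F t in at 0. dist ((f t - f 0) / (t - 0)) 0 < e"
    proof eventually_elim
      case (elim t)
      then have "e / 2 * \<bar>t\<bar> < e * \<bar>t\<bar>" using \<open>e > 0\<close> by simp
      with elim show ?case by (simp add: dist_real_def abs_divide divide_less_eq)
    qed
  qed
qed

section \<open>Complex structures and Reeb vectors\<close>

lemma complex_structure_linear: "complex_structure J \<Longrightarrow> linear J"
  and complex_structure_twice: "complex_structure J \<Longrightarrow> J (J u) = - u"
  and complex_structure_inner: "complex_structure J \<Longrightarrow> J u \<bullet> J v = u \<bullet> v"
  unfolding complex_structure_def by blast+

lemma complex_structure_skew:
  assumes "complex_structure J"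
  shows "J u \<bullet> v = - (u \<bullet> J v)"
  using complex_structure_inner[OF assms, of "J u" v] complex_structure_twice[OF assms, of u]
  by simp

lemma complex_structure_scaleR: "complex_structure J \<Longrightarrow> J (a *\<^sub>R u) = a *\<^sub>R J u"
  and complex_structure_minus: "complex_structure J \<Longrightarrow> J (- u) = - J u"
  using complex_structure_linear linear_scale linear_neg by blast+

lemma complex_structure_eq_0_iff: "complex_structure J \<Longrightarrow> J u = 0 \<longleftrightarrow> u = 0"
  by (metis complex_structure_inner inner_eq_zero_iff)

lemma parallel_if_orthogonal_subset:
  fixes g u :: "'a::real_inner"
  assumes "\<And>v. v \<bullet> g = 0 \<Longrightarrow> v \<bullet> u = 0" and "g \<noteq> 0"
  shows "u = ((u \<bullet> g) / (g \<bullet> g)) *\<^sub>R g"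
proof -
  define v where "v = u - ((u \<bullet> g) / (g \<bullet> g)) *\<^sub>R g"
  have "v \<bullet> g = 0" unfolding v_def using assms(2) by (simp add: inner_diff_left)
  moreover have "v \<bullet> v = v \<bullet> u - ((u \<bullet> g) / (g \<bullet> g)) * (v \<bullet> g)"
    unfolding v_def by (simp add: inner_diff_right)
  ultimately have "v \<bullet> v = 0" using assms(1) by simp
  then show ?thesis unfolding v_def by simp
qed

lemma reeb_eq_of_tangent_hyperplane:
  assumes J: "complex_structure J"
    and T: "tangent_space Q q = {v. v \<bullet> w = 0}" and qw: "q \<bullet> w \<noteq> 0"
  shows "reeb J Q q = (1 / (q \<bullet> w)) *\<^sub>R J w"
  unfolding reeb_def
proof (rule the_equality)
  show "(\<forall>v \<in> tangent_space Q q. omega J v ((1 / (q \<bullet> w)) *\<^sub>R J w) = 0)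
      \<and> omega J q ((1 / (q \<bullet> w)) *\<^sub>R J w) = 1"
    using T qw by (simp add: omega_def complex_structure_inner[OF J] inner_commute)
next
  fix R assume R: "(\<forall>v \<in> tangent_space Q q. omega J v R = 0) \<and> omega J q R = 1"
  have w: "w \<noteq> 0" using qw by auto
  have "v \<bullet> J R = 0" if "v \<bullet> w = 0" for v
    using R T that by (simp add: omega_def complex_structure_skew[OF J])
  then obtain a where "J R = a *\<^sub>R w"
    using parallel_if_orthogonal_subset[OF _ w] by metis
  then have "- R = a *\<^sub>R J w"
    using arg_cong[of _ _ J] by (metis complex_structure_twice[OF J] complex_structure_scaleR[OF J])
  then have Ra: "R = - (a *\<^sub>R J w)" by (metis minus_minus)
  then have "- a * (q \<bullet> w) = 1"
    using R by (simp add: omega_def complex_structure_inner[OF J])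
  then have "- a = 1 / (q \<bullet> w)" using qw by (simp add: field_simps)
  then show "R = (1 / (q \<bullet> w)) *\<^sub>R J w" unfolding Ra by (metis scaleR_left.minus)
qed

lemma ham_field_eq:
  assumes J: "complex_structure J" and DH: "frechet_derivative H (at x) = (\<lambda>u. a \<bullet> u)"
  shows "ham_field J H x = J a"
  unfolding ham_field_def DH
proof (rule the_equality)
  show "\<forall>u. omega J u (J a) = a \<bullet> u"
    by (simp add: omega_def complex_structure_inner[OF J] inner_commute)
next
  fix X assume X: "\<forall>u. omega J u X = a \<bullet> u"
  have "y \<bullet> (X - J a) = 0" for y
    using X[rule_format, of "- J y"] complex_structure_skew[OF J, of a y] inner_commute[of y "J a"]
    by (simp add: omega_def complex_structure_minus[OF J] complex_structure_twice[OF J]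
        inner_diff_right inner_commute[of X y])
  from this[of "X - J a"] show "X = J a" by simp
qed

lemma pos_sim_scaleR_right: "t > 0 \<Longrightarrow> pos_sim a (t *\<^sub>R x) \<longleftrightarrow> pos_sim a x"
  unfolding pos_sim_def by (metis mult_pos_pos scaleR_scaleR divide_pos_pos nonzero_divide_eq_eq
      less_irrefl)

lemma n_plus_scaleR: "t > 0 \<Longrightarrow> n_plus J M (t *\<^sub>R x) = n_plus J M x"
  and n_minus_scaleR: "t > 0 \<Longrightarrow> n_minus J M (t *\<^sub>R x) = n_minus J M x"
  unfolding n_plus_def n_minus_def
  using pos_sim_scaleR_right[of t _ x] pos_sim_scaleR_right[of t _ "- x"] by simp_all

section \<open>Support points\<close>

definition is_support_point :: "'a::real_inner set \<Rightarrow> 'a \<Rightarrow> 'a \<Rightarrow> bool" where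
  "is_support_point C w q \<longleftrightarrow> q \<in> C \<and> (\<forall>z\<in>C. z \<bullet> w \<le> q \<bullet> w)"

lemma is_support_point_exists:
  fixes C :: "'a::real_inner set"
  assumes "compact C" "C \<noteq> {}"
  shows "\<exists>q. is_support_point C w q"
proof -
  have "continuous_on C (\<lambda>z. z \<bullet> w)" by (intro continuous_intros)
  then show ?thesis
    using continuous_attains_sup[OF assms] unfolding is_support_point_def by blast
qed

lemma is_support_point_frontier:
  fixes C :: "'a::real_inner set"
  assumes "closed C" "w \<noteq> 0" "is_support_point C w q"
  shows "q \<in> frontier C"
proof (rule ccontr)
  assume "q \<notin> frontier C"
  then have "q \<in> interior C"
    using assms(1,3) by (simp add: frontier_def closure_closed is_support_point_def)
  then obtain e where e: "e > 0" "ball q e \<subseteq> C" using mem_interior by blast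
  define z where "z = q + (e / 2 / norm w) *\<^sub>R w"
  have "z \<in> C" using e assms(2) unfolding z_def by (auto simp: dist_norm)
  moreover have "z \<bullet> w = q \<bullet> w + e / 2 * norm w"
    unfolding z_def using assms(2)
    by (simp add: inner_add_left power2_norm_eq_inner[symmetric] power2_eq_square)
  moreover have "e / 2 * norm w > 0" using e(1) assms(2) by simp
  ultimately show False using assms(3) by (fastforce simp: is_support_point_def)
qed

lemma is_support_point_inner_pos:
  fixes C :: "'a::real_inner set"
  assumes "0 \<in> interior C" "w \<noteq> 0" "is_support_point C w q"
  shows "q \<bullet> w > 0"
proof -
  obtain e where e: "e > 0" "ball 0 e \<subseteq> C" using assms(1) mem_interior by blast
  define z where "z = (e / 2 / norm w) *\<^sub>R w"
  have "z \<in> C" using e assms(2) unfolding z_def by auto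
  moreover have "z \<bullet> w = e / 2 * norm w"
    unfolding z_def using assms(2) by (simp add: power2_norm_eq_inner[symmetric] power2_eq_square)
  moreover have "e / 2 * norm w > 0" using e(1) assms(2) by simp
  ultimately show ?thesis using assms(3) unfolding is_support_point_def by fastforce
qed

lemma is_support_point_differences:
  assumes "is_support_point K w a" "is_support_point K (- w) b"
  shows "is_support_point {a - b | a b. a \<in> K \<and> b \<in> K} w (a - b)"
  using assms unfolding is_support_point_def by (fastforce simp: inner_diff_left)

lemma tangent_space_subset_orthogonal:
  assumes "Q \<subseteq> C" "is_support_point C w q"
  shows "tangent_space Q q \<subseteq> {v. v \<bullet> w = 0}"
proof
  fix v assume "v \<in> tangent_space Q q"
  then obtain \<gamma> e where e: "e > 0" "\<gamma> 0 = q" "\<forall>t. \<bar>t\<bar> < e \<longrightarrow> \<gamma> t \<in> Q"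
      "(\<gamma> has_vector_derivative v) (at 0)"
    unfolding tangent_space_def by blast
  have "((\<lambda>t. \<gamma> t \<bullet> w) has_real_derivative v \<bullet> w) (at 0)"
    using e(4) by (rule has_vector_derivative_inner_const)
  moreover have "\<forall>t. \<bar>0 - t\<bar> < e \<longrightarrow> \<gamma> t \<bullet> w \<le> \<gamma> 0 \<bullet> w"
    using e(2,3) assms unfolding is_support_point_def by auto
  ultimately show "v \<in> {v. v \<bullet> w = 0}" using DERIV_local_max e(1) by fastforce
qed

text \<open>The difference quotient of the support function is squeezed between \<open>0\<close> and the
  increment of the support point.\<close>

lemma support_function_has_derivative:
  fixes z :: "'a::real_inner \<Rightarrow> 'a"
  assumes supp: "\<And>u. u \<noteq> 0 \<Longrightarrow> is_support_point C u (z u)"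
    and cont: "isCont z w" and w: "w \<noteq> 0"
  shows "((\<lambda>u. z u \<bullet> u) has_derivative (\<lambda>h. z w \<bullet> h)) (at w)"
  unfolding has_derivative_at
proof
  show "bounded_linear ((\<bullet>) (z w))" by (rule bounded_linear_inner_right)
  have "((\<lambda>h. z (w + h)) \<longlongrightarrow> z w) (at 0)"
    using cont unfolding isCont_def by (rule LIM_offset_zero)
  then have dz: "((\<lambda>h. norm (z (w + h) - z w)) \<longlongrightarrow> 0) (at 0)"
    by (intro tendsto_norm_zero LIM_zero)
  show "((\<lambda>h. norm (z (w + h) \<bullet> (w + h) - z w \<bullet> w - z w \<bullet> h) / norm h) \<longlongrightarrow> 0) (at 0)"
  proof (rule Lim_null_comparison[OF _ dz])
    have "\<forall>\<^sub>F h in at 0. norm h < norm w"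
      unfolding eventually_at using w by (intro exI[of _ "norm w"]) (auto simp: dist_norm)
    then show "\<forall>\<^sub>F h in at 0.
        norm (norm (z (w + h) \<bullet> (w + h) - z w \<bullet> w - z w \<bullet> h) / norm h) \<le> norm (z (w + h) - z w)"
    proof (rule eventually_mono)
      fix h :: 'a assume h: "norm h < norm w"
      then have wh: "w + h \<noteq> 0" by (metis add.inverse_unique norm_minus_cancel less_irrefl)
      define E where "E = z (w + h) \<bullet> (w + h) - z w \<bullet> w - z w \<bullet> h"
      have "z w \<bullet> (w + h) \<le> z (w + h) \<bullet> (w + h)" and "z (w + h) \<bullet> w \<le> z w \<bullet> w"
        using supp[OF wh] supp[OF w] unfolding is_support_point_def by blast+
      then have "0 \<le> E" "E \<le> (z (w + h) - z w) \<bullet> h"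
        unfolding E_def by (simp_all add: inner_add_right inner_diff_left)
      then have "\<bar>E\<bar> \<le> norm (z (w + h) - z w) * norm h"
        using norm_cauchy_schwarz[of "z (w + h) - z w" h] by simp
      then show "norm (norm E / norm h) \<le> norm (z (w + h) - z w)"
        by (cases "h = 0") (simp_all add: divide_le_eq)
    qed
  qed
qed

section \<open>The Minkowski gauge of a convex body\<close>

definition radial_gauge :: "'a::real_normed_vector set \<Rightarrow> 'a \<Rightarrow> real" where
  "radial_gauge C y = (if y = 0 then 0 else inverse (THE d. 0 < d \<and> d *\<^sub>R y \<in> frontier C))"

locale convex_body =
  fixes C :: "'a::euclidean_space set"
  assumes convex: "convex C" and compact: "compact C" and zero_in_interior: "0 \<in> interior C"
begin

lemma closed: "closed C"
  using compact compact_imp_closed by blast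

lemma frontier_subset: "frontier C \<subseteq> C"
  using closed frontier_subset_closed by blast

lemma zero_notin_frontier: "0 \<notin> frontier C"
  using zero_in_interior by (simp add: frontier_def)

lemma scaleR_beyond_frontier_notin:
  assumes "d *\<^sub>R y \<in> frontier C" "0 < d" "d < e"
  shows "e *\<^sub>R y \<notin> C"
proof
  assume "e *\<^sub>R y \<in> C"
  then have "e *\<^sub>R y - (1 - d / e) *\<^sub>R (e *\<^sub>R y - 0) \<in> interior C"
    using assms(2,3) by (intro mem_interior_convex_shrink convex zero_in_interior) auto
  then have "d *\<^sub>R y \<in> interior C" using assms(2,3) by (simp add: algebra_simps)
  then show False using assms(1) by (simp add: frontier_def)
qed

lemma ray_frontier_unique:
  assumes "d1 *\<^sub>R y \<in> frontier C" "0 < d1" "d2 *\<^sub>R y \<in> frontier C" "0 < d2"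
  shows "d1 = d2"
  using scaleR_beyond_frontier_notin[of d1 y d2] scaleR_beyond_frontier_notin[of d2 y d1]
    assms frontier_subset by (meson linorder_neqE_linordered_idom subsetD)

lemma radial_gauge_pos: "y \<noteq> 0 \<Longrightarrow> 0 < radial_gauge C y"
  and radial_gauge_scaled_in_frontier: "y \<noteq> 0 \<Longrightarrow> (1 / radial_gauge C y) *\<^sub>R y \<in> frontier C"
proof -
  assume y: "y \<noteq> 0"
  obtain d where d: "0 < d" "0 + d *\<^sub>R y \<in> frontier C"
    using ray_to_frontier[OF compact_imp_bounded[OF compact] zero_in_interior y] by blast
  have "(THE d. 0 < d \<and> d *\<^sub>R y \<in> frontier C) = d"
    using d ray_frontier_unique by (intro the_equality) auto
  then show "0 < radial_gauge C y" "(1 / radial_gauge C y) *\<^sub>R y \<in> frontier C"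
    unfolding radial_gauge_def using y d by (auto simp: divide_inverse)
qed

lemma radial_gauge_frontier:
  assumes "y \<in> frontier C"
  shows "radial_gauge C y = 1"
proof -
  have y: "y \<noteq> 0" using assms zero_notin_frontier by blast
  have "1 / radial_gauge C y = 1"
    using ray_frontier_unique[of "1 / radial_gauge C y" y 1] assms
      radial_gauge_pos[OF y] radial_gauge_scaled_in_frontier[OF y] by simp
  then show ?thesis by simp
qed

lemma radial_gauge_le:
  assumes "0 < s" "(1 / s) *\<^sub>R y \<in> C"
  shows "radial_gauge C y \<le> s"
proof (cases "y = 0")
  case True then show ?thesis using assms by (simp add: radial_gauge_def)
next
  case False
  show ?thesis
  proof (rule ccontr)
    assume "\<not> radial_gauge C y \<le> s"
    then have "1 / radial_gauge C y < 1 / s" using assms(1) by (simp add: frac_less2)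
    then show False
      using scaleR_beyond_frontier_notin[OF radial_gauge_scaled_in_frontier[OF False]]
        radial_gauge_pos[OF False] assms(2) by simp
  qed
qed

lemma radial_gauge_ge_support:
  assumes "\<forall>z\<in>C. z \<bullet> w \<le> m"
  shows "y \<bullet> w \<le> radial_gauge C y * m"
proof (cases "y = 0")
  case True then show ?thesis by (simp add: radial_gauge_def)
next
  case False
  have "((1 / radial_gauge C y) *\<^sub>R y) \<bullet> w \<le> m"
    using radial_gauge_scaled_in_frontier[OF False] frontier_subset assms by blast
  then show ?thesis using radial_gauge_pos[OF False] by (simp add: divide_le_eq mult.commute)
qed

text \<open>The radial projection of \<open>\<beta>\<close> onto the boundary has the same velocity at \<open>0\<close>.\<close>

lemma tangent_space_frontier_if_gauge_flat:
  assumes q: "q \<in> frontier C" and \<beta>0: "\<beta> 0 = q" and \<beta>': "(\<beta> has_vector_derivative v) (at 0)"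
    and flat: "((\<lambda>t. radial_gauge C (\<beta> t)) has_real_derivative 0) (at 0)"
  shows "v \<in> tangent_space (frontier C) q"
proof -
  have q0: "q \<noteq> 0" using q zero_notin_frontier by blast
  have "isCont \<beta> 0" using \<beta>' by (rule has_vector_derivative_continuous)
  then obtain e where e: "e > 0" "\<forall>t. dist t 0 < e \<longrightarrow> dist (\<beta> t) q < norm q"
    using q0 \<beta>0 unfolding continuous_at_eps_delta by (metis zero_less_norm_iff)
  then have \<beta>_nz: "\<beta> t \<noteq> 0" if "\<bar>t\<bar> < e" for t
    using that by fastforce
  define \<gamma> where "\<gamma> t = inverse (radial_gauge C (\<beta> t)) *\<^sub>R \<beta> t" for t
  have rq: "radial_gauge C q = 1" by (rule radial_gauge_frontier[OF q])
  have "\<gamma> t \<in> frontier C" if "\<bar>t\<bar> < e" for t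
    using radial_gauge_scaled_in_frontier[OF \<beta>_nz[OF that]] by (simp add: \<gamma>_def divide_inverse)
  moreover have "((\<lambda>t. inverse (radial_gauge C (\<beta> t))) has_real_derivative 0) (at 0)"
    using DERIV_inverse_fun[OF flat] \<beta>0 rq by simp
  then have "(\<gamma> has_vector_derivative v) (at 0)"
    using has_vector_derivative_scaleR[OF _ \<beta>'] \<beta>0 rq unfolding \<gamma>_def by fastforce
  moreover have "\<gamma> 0 = q" using \<beta>0 rq by (simp add: \<gamma>_def)
  ultimately show ?thesis
    unfolding tangent_space_def using e(1) by blast
qed

text \<open>The gauge along the curve lies between the flat function \<open>\<beta> t \<bullet> w / q \<bullet> w\<close> and \<open>1\<close>.\<close>

lemma tangent_space_frontier_of_curve_inside:
  assumes q: "is_support_point C w q" and w: "w \<noteq> 0"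
    and \<beta>0: "\<beta> 0 = q" and \<beta>': "(\<beta> has_vector_derivative v) (at 0)" and vw: "v \<bullet> w = 0"
    and e: "e > 0" and \<beta>C: "\<And>t. \<bar>t\<bar> < e \<Longrightarrow> \<beta> t \<in> C"
  shows "v \<in> tangent_space (frontier C) q"
proof (rule tangent_space_frontier_if_gauge_flat[OF _ \<beta>0 \<beta>'])
  show qf: "q \<in> frontier C" by (rule is_support_point_frontier[OF closed w q])
  have qw: "q \<bullet> w > 0" by (rule is_support_point_inner_pos[OF zero_in_interior w q])
  define L where "L t = (\<beta> t \<bullet> w) / (q \<bullet> w)" for t
  have "(L has_real_derivative (v \<bullet> w) / (q \<bullet> w)) (at 0)"
    unfolding L_def by (intro DERIV_cdivide has_vector_derivative_inner_const[OF \<beta>'])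
  then have L_flat: "\<forall>\<epsilon>>0. \<forall>\<^sub>F t in at 0. \<bar>L t - L 0\<bar> \<le> \<epsilon> * \<bar>t\<bar>"
    using vw has_real_derivative_0_iff_flat by simp
  have squeeze: "\<bar>radial_gauge C (\<beta> t) - radial_gauge C (\<beta> 0)\<bar> \<le> \<bar>L t - L 0\<bar>" if "\<bar>t\<bar> < e" for t
  proof -
    have "radial_gauge C (\<beta> t) \<le> 1" using radial_gauge_le[of 1] \<beta>C[OF that] by simp
    moreover have "\<beta> t \<bullet> w \<le> radial_gauge C (\<beta> t) * (q \<bullet> w)"
      using q unfolding is_support_point_def by (intro radial_gauge_ge_support) blast
    then have "L t \<le> radial_gauge C (\<beta> t)" unfolding L_def using qw by (simp add: divide_le_eq)
    moreover have "L 0 = 1" "radial_gauge C (\<beta> 0) = 1"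
      using qw radial_gauge_frontier[OF qf] by (simp_all add: L_def \<beta>0)
    ultimately show ?thesis by simp
  qed
  have "\<forall>\<^sub>F t in at 0. \<bar>t\<bar> < e"
    using e by (auto simp: eventually_at dist_real_def intro!: exI[of _ e])
  then show "((\<lambda>t. radial_gauge C (\<beta> t)) has_real_derivative 0) (at 0)"
    unfolding has_real_derivative_0_iff_flat
  proof (intro allI impI)
    fix \<epsilon> :: real assume "\<epsilon> > 0"
    with L_flat have "\<forall>\<^sub>F t in at 0. \<bar>L t - L 0\<bar> \<le> \<epsilon> * \<bar>t\<bar>" by blast
    with \<open>\<forall>\<^sub>F t in at 0. \<bar>t\<bar> < e\<close>
    show "\<forall>\<^sub>F t in at 0. \<bar>radial_gauge C (\<beta> t) - radial_gauge C (\<beta> 0)\<bar> \<le> \<epsilon> * \<bar>t\<bar>"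
      by eventually_elim (use squeeze in fastforce)
  qed
qed

lemma zero_notin_exterior_frontier: "0 \<notin> exterior (frontier C)"
proof -
  have "\<not> convex (frontier C)"
    using Krein_Milman_frontier[OF convex compact] zero_in_interior zero_notin_frontier
      interior_subset convex_hull_eq by blast
  \<comment> \<open>\<open>exterior Q\<close> parses as \<open>(- convex) hull Q\<close>, the least non-convex superset of \<open>Q\<close>, which is
    \<open>Q\<close> itself here; either way the origin is not in it.\<close>
  then have "exterior (frontier C) = frontier C"
    unfolding exterior_def by (simp add: fun_Compl_def hull_same)
  then show ?thesis using zero_notin_frontier by simp
qed

end

section \<open>Smooth strictly convex bodies\<close>

locale smooth_strictly_convex_body = K: convex_body K for K :: "'a::euclidean_space set" +
  fixes M :: "'a set" and F :: "'a \<Rightarrow> real" and c :: real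
  assumes frontier_K: "frontier K = M" and smooth: "smooth_fun F"
    and hessian_pos: "pos_def_hessian F" and level: "M = {y. F y = c}"
begin

definition DF :: "'a \<Rightarrow> 'a \<Rightarrow> real" where
  "DF x = frechet_derivative F (at x)"

definition gradF :: "'a \<Rightarrow> 'a" where
  "gradF x = (\<Sum>b\<in>Basis. DF x b *\<^sub>R b)"

lemma F_C2: "Ck (Suc (Suc 0)) F"
  using smooth unfolding smooth_fun_def by blast

lemma F_has_derivative: "(F has_derivative DF x) (at x)"
  using F_C2 unfolding DF_def by (simp add: frechet_derivative_works[symmetric])

lemma DF_linear: "linear (DF x)"
  using F_has_derivative has_derivative_linear by blast

lemma DF_eq_inner_gradF: "DF x u = gradF x \<bullet> u"
proof -
  have "DF x u = DF x (\<Sum>b\<in>Basis. (u \<bullet> b) *\<^sub>R b)" by (simp add: euclidean_representation)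
  also have "\<dots> = (\<Sum>b\<in>Basis. (u \<bullet> b) * DF x b)"
    by (simp add: linear_sum[OF DF_linear] linear_scale[OF DF_linear])
  also have "\<dots> = gradF x \<bullet> u"
    unfolding gradF_def inner_sum_left by (simp add: inner_commute mult.commute)
  finally show ?thesis .
qed

lemma DF_direction_has_derivative:
  "((\<lambda>z. DF z v) has_derivative frechet_derivative (\<lambda>z. DF z v) (at x)) (at x)"
  using F_C2 unfolding DF_def by (simp add: frechet_derivative_works[symmetric])

lemma gradF_continuous: "continuous_on UNIV gradF"
proof -
  have "continuous_on UNIV (\<lambda>z. DF z b)" for b
    using DF_direction_has_derivative
    by (meson differentiableI differentiable_at_imp_differentiable_on differentiable_imp_continuous_on)
  then show ?thesis unfolding gradF_def by (intro continuous_intros)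
qed

lemma F_line_has_derivative:
  "((\<lambda>s. F (x + s *\<^sub>R v)) has_real_derivative DF (x + t *\<^sub>R v) v) (at t)"
  and DF_line_has_derivative:
  "((\<lambda>s. DF (x + s *\<^sub>R v) v) has_real_derivative
      frechet_derivative (\<lambda>z. DF z v) (at (x + t *\<^sub>R v)) v) (at t)"
  by (intro has_real_derivative_compose_vector F_has_derivative DF_direction_has_derivative;
      auto intro!: derivative_eq_intros)+

text \<open>The positive definite Hessian makes the first derivative increase along every segment.\<close>

lemma strict_gradient_inequality:
  assumes "x \<noteq> y"
  shows "F x + DF x (y - x) < F y"
proof -
  define v where "v = y - x"
  have v: "v \<noteq> 0" using assms unfolding v_def by simp
  obtain s where s: "0 < s" "s < 1"
    "F (x + 1 *\<^sub>R v) - F (x + 0 *\<^sub>R v) = (1 - 0) * DF (x + s *\<^sub>R v) v"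
    using MVT2[OF zero_less_one F_line_has_derivative] by blast
  have "frechet_derivative (\<lambda>z. DF z v) (at z) v > 0" for z
    using hessian_pos v unfolding pos_def_hessian_def DF_def by blast
  then have "DF (x + 0 *\<^sub>R v) v < DF (x + s *\<^sub>R v) v"
    by (intro DERIV_pos_imp_increasing[OF s(1)]) (use DF_line_has_derivative in blast)
  then show ?thesis using s(3) unfolding v_def by simp
qed

lemma gradient_inequality: "F x + DF x (y - x) \<le> F y"
  using strict_gradient_inequality[of x y] by (cases "x = y") (auto simp: linear_0[OF DF_linear])

lemma convex_on_F: "convex_on UNIV F"
proof (rule convex_onI)
  fix t :: real and x y :: 'a
  assume t: "0 < t" "t < 1"
  define z where "z = (1 - t) *\<^sub>R x + t *\<^sub>R y"
  have "(1 - t) * DF z (x - z) + t * DF z (y - z) = DF z ((1 - t) *\<^sub>R (x - z) + t *\<^sub>R (y - z))"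
    using DF_linear[of z] by (simp add: linear_add linear_scale)
  also have "\<dots> = 0" unfolding z_def by (simp add: algebra_simps linear_0[OF DF_linear])
  finally have "(1 - t) * DF z (x - z) + t * DF z (y - z) = 0" .
  moreover have "(1 - t) * (F z + DF z (x - z)) \<le> (1 - t) * F x"
    and "t * (F z + DF z (y - z)) \<le> t * F y"
    using gradient_inequality t by (intro mult_left_mono; simp)+
  ultimately show "F ((1 - t) *\<^sub>R x + t *\<^sub>R y) \<le> (1 - t) * F x + t * F y"
    unfolding z_def[symmetric] by (simp add: algebra_simps)
qed simp

lemma M_subset_K: "M \<subseteq> K"
  using frontier_K K.frontier_subset by blast

lemma convex_hull_M: "convex hull M = K"
  using Krein_Milman_frontier[OF K.convex K.compact] frontier_K by simp

lemma F_le_on_K: "y \<in> K \<Longrightarrow> F y \<le> c"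
  using convex_on_convex_hull_bound[of M F c] convex_on_subset[OF convex_on_F] convex_hull_M level
  by auto

lemma F_0_less: "F 0 < c"
proof -
  have "F 0 \<le> c" using F_le_on_K K.zero_in_interior interior_subset by blast
  moreover have "F 0 \<noteq> c" using K.zero_notin_frontier frontier_K level by blast
  ultimately show ?thesis by simp
qed

lemma K_eq_sublevel: "K = {y. F y \<le> c}"
proof (intro equalityI subsetI)
  fix y assume "y \<in> {y. F y \<le> c}"
  then have y: "F y \<le> c" by simp
  show "y \<in> K"
  proof (rule ccontr)
    assume "y \<notin> K"
    then have "y \<noteq> 0" using K.zero_in_interior interior_subset by blast
    then obtain d where d: "0 < d" "0 + d *\<^sub>R y \<in> frontier K"
        "\<And>e. 0 \<le> e \<Longrightarrow> e < d \<Longrightarrow> 0 + e *\<^sub>R y \<in> interior K"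
      using ray_to_frontier[OF compact_imp_bounded[OF K.compact] K.zero_in_interior] by blast
    have "\<not> 1 < d" using d(3)[of 1] \<open>y \<notin> K\<close> interior_subset by auto
    moreover have "d \<noteq> 1" using d(2) \<open>y \<notin> K\<close> K.frontier_subset by auto
    ultimately have "d < 1" by simp
    have "F (d *\<^sub>R y) = c" using d(2) frontier_K level by auto
    moreover have "F ((1 - d) *\<^sub>R 0 + d *\<^sub>R y) \<le> (1 - d) * F 0 + d * F y"
      using convex_onD[OF convex_on_F, of d 0 y] d(1) \<open>d < 1\<close> by simp
    moreover have "(1 - d) * F 0 < (1 - d) * c" using F_0_less \<open>d < 1\<close> by simp
    moreover have "d * F y \<le> d * c" using y d(1) by simp
    ultimately show False by (simp add: algebra_simps)
  qed
qed (use F_le_on_K in blast)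

lemma is_support_point_gradF:
  assumes "q \<in> M"
  shows "is_support_point K (gradF q) q"
  unfolding is_support_point_def
proof (intro conjI ballI)
  show "q \<in> K" using assms M_subset_K by blast
  fix z assume "z \<in> K"
  then have "F q + DF q (z - q) \<le> c"
    using gradient_inequality[of q z] F_le_on_K by (meson order_trans)
  then show "z \<bullet> gradF q \<le> q \<bullet> gradF q"
    using assms level by (simp add: DF_eq_inner_gradF inner_diff_right inner_commute[of _ "gradF q"])
qed

lemma inner_gradF_pos:
  assumes "q \<in> M"
  shows "0 < q \<bullet> gradF q"
proof -
  have "c - gradF q \<bullet> q \<le> F 0"
    using gradient_inequality[of q 0] assms level by (simp add: DF_eq_inner_gradF)
  then show ?thesis using F_0_less inner_commute[of q "gradF q"] by linarith
qed

lemma gradF_nonzero: "q \<in> M \<Longrightarrow> gradF q \<noteq> 0"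
  using inner_gradF_pos by fastforce

lemma F_along_rescaled_line_has_derivative:
  assumes "v \<bullet> gradF q = 0"
  shows "((\<lambda>t. F ((1 / (1 + a * t)) *\<^sub>R (q + t *\<^sub>R v))) has_real_derivative - a * (q \<bullet> gradF q)) (at 0)"
proof -
  have "((\<lambda>t. (1 / (1 + a * t)) *\<^sub>R (q + t *\<^sub>R v)) has_vector_derivative v - a *\<^sub>R q) (at 0)"
    by (auto intro!: derivative_eq_intros simp: divide_inverse)
  from has_real_derivative_compose_vector[OF this F_has_derivative]
  have "((\<lambda>t. F ((1 / (1 + a * t)) *\<^sub>R (q + t *\<^sub>R v))) has_real_derivative DF q (v - a *\<^sub>R q)) (at 0)"
    by simp
  then show ?thesis
    using assms by (simp add: DF_eq_inner_gradF inner_diff_right inner_commute)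
qed

text \<open>Along a tangent direction \<open>F\<close> decreases to first order on the rescaled points
  \<open>(q + t v) / (1 + \<epsilon> \<bar>t\<bar>)\<close>, which therefore stay in \<open>K\<close>.\<close>

lemma radial_gauge_along_tangent_line_le:
  assumes q: "q \<in> M" and v: "v \<bullet> gradF q = 0" and \<epsilon>: "\<epsilon> > 0"
  shows "\<forall>\<^sub>F t in at 0. radial_gauge K (q + t *\<^sub>R v) \<le> 1 + \<epsilon> * \<bar>t\<bar>"
proof -
  have qg: "0 < q \<bullet> gradF q" by (rule inner_gradF_pos[OF q])
  have Fq: "F q = c" using q level by simp
  have gauge_le: "radial_gauge K (q + t *\<^sub>R v) \<le> 1 + \<epsilon> * \<bar>t\<bar>"
    if "F ((1 / (1 + \<epsilon> * \<bar>t\<bar>)) *\<^sub>R (q + t *\<^sub>R v)) < c" for t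
    using that \<epsilon> K_eq_sublevel by (intro K.radial_gauge_le) (auto intro: add_pos_nonneg)
  obtain d1 where d1: "d1 > 0"
    "\<forall>h>0. h < d1 \<longrightarrow> F ((1 / (1 + \<epsilon> * h)) *\<^sub>R (q + h *\<^sub>R v)) < c"
    using DERIV_neg_dec_right[OF F_along_rescaled_line_has_derivative[OF v, of \<epsilon>]] \<epsilon> qg Fq
    by auto
  have right: "\<forall>\<^sub>F t in at_right 0. radial_gauge K (q + t *\<^sub>R v) \<le> 1 + \<epsilon> * \<bar>t\<bar>"
    unfolding eventually_at_right_field
  proof (intro exI[of _ d1] conjI allI impI)
    fix t :: real assume "0 < t" "t < d1"
    then show "radial_gauge K (q + t *\<^sub>R v) \<le> 1 + \<epsilon> * \<bar>t\<bar>" using d1 gauge_le[of t] by simp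
  qed (rule d1(1))
  obtain d2 where d2: "d2 > 0"
    "\<forall>h>0. h < d2 \<longrightarrow> F ((1 / (1 + \<epsilon> * h)) *\<^sub>R (q + (- h) *\<^sub>R v)) < c"
    using DERIV_pos_inc_left[OF F_along_rescaled_line_has_derivative[OF v, of "- \<epsilon>"]] \<epsilon> qg Fq
    by auto
  have left: "\<forall>\<^sub>F t in at_left 0. radial_gauge K (q + t *\<^sub>R v) \<le> 1 + \<epsilon> * \<bar>t\<bar>"
    unfolding eventually_at_left_field
  proof (intro exI[of _ "- d2"] conjI allI impI)
    fix t :: real assume "- d2 < t" "t < 0"
    then show "radial_gauge K (q + t *\<^sub>R v) \<le> 1 + \<epsilon> * \<bar>t\<bar>"
      using d2(2)[rule_format, of "- t"] gauge_le[of t] by simp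
  qed (use d2(1) in simp)
  show ?thesis using left right by (simp add: eventually_at_split)
qed

lemma tangent_space_M:
  assumes q: "q \<in> M"
  shows "tangent_space M q = {v. v \<bullet> gradF q = 0}"
proof
  show "tangent_space M q \<subseteq> {v. v \<bullet> gradF q = 0}"
    by (rule tangent_space_subset_orthogonal[OF M_subset_K is_support_point_gradF[OF q]])
  show "{v. v \<bullet> gradF q = 0} \<subseteq> tangent_space M q"
  proof
    fix v assume "v \<in> {v. v \<bullet> gradF q = 0}"
    then have v: "v \<bullet> gradF q = 0" by simp
    have qK: "q \<in> frontier K" using q frontier_K by simp
    have "1 \<le> radial_gauge K (q + t *\<^sub>R v)" for t
    proof -
      have "(q + t *\<^sub>R v) \<bullet> gradF q \<le> radial_gauge K (q + t *\<^sub>R v) * (q \<bullet> gradF q)"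
        using is_support_point_gradF[OF q] unfolding is_support_point_def
        by (intro K.radial_gauge_ge_support) blast
      then show ?thesis using v inner_gradF_pos[OF q] by (simp add: inner_add_left)
    qed
    then have "\<forall>\<^sub>F t in at 0. \<bar>radial_gauge K (q + t *\<^sub>R v) - radial_gauge K (q + 0 *\<^sub>R v)\<bar> \<le> \<epsilon> * \<bar>t\<bar>"
      if "\<epsilon> > 0" for \<epsilon>
      using radial_gauge_along_tangent_line_le[OF q v that] K.radial_gauge_frontier[OF qK]
      by (auto elim!: eventually_mono)
    then have "((\<lambda>t. radial_gauge K (q + t *\<^sub>R v)) has_real_derivative 0) (at 0)"
      unfolding has_real_derivative_0_iff_flat by blast
    then have "v \<in> tangent_space (frontier K) q"
      by (intro K.tangent_space_frontier_if_gauge_flat[OF qK]) (auto intro!: derivative_eq_intros)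
    then show "v \<in> tangent_space M q" using frontier_K by simp
  qed
qed

lemma is_support_point_M_iff:
  assumes q: "q \<in> M" and u: "u \<noteq> 0"
  shows "is_support_point K u q \<longleftrightarrow> (\<exists>\<alpha>>0. u = \<alpha> *\<^sub>R gradF q)"
proof
  assume supp: "is_support_point K u q"
  have "v \<bullet> u = 0" if "v \<bullet> gradF q = 0" for v
    using tangent_space_subset_orthogonal[OF M_subset_K supp] tangent_space_M[OF q] that by blast
  then obtain \<alpha> where ua: "u = \<alpha> *\<^sub>R gradF q"
    using parallel_if_orthogonal_subset[OF _ gradF_nonzero[OF q]] by metis
  have "0 < \<alpha> * (q \<bullet> gradF q)"
    using is_support_point_inner_pos[OF K.zero_in_interior u supp] ua by simp
  then have "\<alpha> > 0" using inner_gradF_pos[OF q] by (simp add: zero_less_mult_iff)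
  then show "\<exists>\<alpha>>0. u = \<alpha> *\<^sub>R gradF q" using ua by blast
next
  assume "\<exists>\<alpha>>0. u = \<alpha> *\<^sub>R gradF q"
  then show "is_support_point K u q"
    using is_support_point_gradF[OF q] unfolding is_support_point_def by (auto simp: mult_left_mono)
qed

lemma is_support_point_unique:
  assumes u: "u \<noteq> 0" and 1: "is_support_point K u q1" and 2: "is_support_point K u q2"
  shows "q1 = q2"
proof (rule ccontr)
  assume ne: "q1 \<noteq> q2"
  have q1: "q1 \<in> M" and q2: "q2 \<in> M"
    using is_support_point_frontier[OF K.closed u] 1 2 frontier_K by blast+
  obtain \<alpha> where \<alpha>: "\<alpha> > 0" "u = \<alpha> *\<^sub>R gradF q1"
    using is_support_point_M_iff[OF q1 u] 1 by blast
  have "gradF q1 \<bullet> (q2 - q1) < 0"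
    using strict_gradient_inequality[OF ne] q1 q2 level by (simp add: DF_eq_inner_gradF)
  then have "u \<bullet> (q2 - q1) < 0" using \<alpha> by (simp add: mult_pos_neg)
  moreover have "q2 \<bullet> u = q1 \<bullet> u" using 1 2 unfolding is_support_point_def by (meson order_antisym)
  ultimately show False by (simp add: inner_diff_right inner_commute)
qed

definition support_point :: "'a \<Rightarrow> 'a" where
  "support_point u = (THE q. is_support_point K u q)"

lemma is_support_point_support_point: "u \<noteq> 0 \<Longrightarrow> is_support_point K u (support_point u)"
  unfolding support_point_def
  using is_support_point_exists[OF K.compact] K.zero_in_interior is_support_point_unique
  by (metis empty_iff interior_empty theI)

lemma support_point_eqI: "u \<noteq> 0 \<Longrightarrow> is_support_point K u q \<Longrightarrow> support_point u = q"
  using is_support_point_support_point is_support_point_unique by blast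

lemma support_point_in_M: "u \<noteq> 0 \<Longrightarrow> support_point u \<in> M"
  using is_support_point_frontier[OF K.closed] is_support_point_support_point frontier_K by blast

text \<open>On the unit sphere the support point inverts the continuous Gauss map of the compact
  hypersurface \<open>M\<close>, hence is continuous; it is constant along rays.\<close>

lemma support_point_continuous: "continuous_on (- {0}) support_point"
proof -
  define \<nu> where "\<nu> q = (1 / norm (gradF q)) *\<^sub>R gradF q" for q
  have \<nu>_cont: "continuous_on M \<nu>"
    unfolding \<nu>_def using gradF_nonzero
    by (intro continuous_intros continuous_on_subset[OF gradF_continuous]) auto
  have \<nu>_nz: "\<nu> q \<noteq> 0" if "q \<in> M" for q
    using gradF_nonzero[OF that] unfolding \<nu>_def by simp
  have inv: "support_point (\<nu> q) = q" if "q \<in> M" for q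
    using that \<nu>_nz gradF_nonzero[OF that]
    by (intro support_point_eqI) (auto simp: is_support_point_M_iff \<nu>_def)
  have "compact M" using K.compact frontier_K by auto
  then have cont: "continuous_on (\<nu> ` M) support_point"
    using continuous_on_inv[OF \<nu>_cont _ ] inv by blast
  have ray: "(1 / norm u) *\<^sub>R u \<in> \<nu> ` M \<and> support_point ((1 / norm u) *\<^sub>R u) = support_point u"
    if u: "u \<noteq> 0" for u
  proof -
    define q where "q = support_point u"
    have q: "q \<in> M" using support_point_in_M[OF u] q_def by simp
    obtain \<alpha> where \<alpha>: "\<alpha> > 0" "u = \<alpha> *\<^sub>R gradF q"
      using is_support_point_M_iff[OF q u] is_support_point_support_point[OF u] q_def by blast
    then have "(1 / norm u) *\<^sub>R u = \<nu> q" using gradF_nonzero[OF q] by (simp add: \<nu>_def)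
    then show ?thesis using inv q q_def by auto
  qed
  have "(\<lambda>u. (1 / norm u) *\<^sub>R u) ` (- {0}) \<subseteq> \<nu> ` M" using ray by blast
  then have "continuous_on (- {0}) (\<lambda>u. support_point ((1 / norm u) *\<^sub>R u))"
    by (intro continuous_on_compose2[OF cont]) (auto intro!: continuous_intros)
  then show ?thesis
    by (rule continuous_on_cong[THEN iffD1, rotated 2]) (use ray in auto)
qed

subsection \<open>The difference body\<close>

definition difference_body :: "'a set" where
  "difference_body = {a - b | a b. a \<in> K \<and> b \<in> K}"

lemma K_subset_difference_body: "K \<subseteq> difference_body"
  unfolding difference_body_def using K.zero_in_interior interior_subset by force

sublocale D: convex_body difference_body
proof
  have "difference_body = (\<Union>a\<in>K. \<Union>b\<in>K. {a - b})" unfolding difference_body_def by auto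
  then show "convex difference_body" using convex_differences[OF K.convex K.convex] by simp
  show "compact difference_body"
    unfolding difference_body_def by (rule compact_differences[OF K.compact K.compact])
  show "0 \<in> interior difference_body"
    using K.zero_in_interior interior_mono[OF K_subset_difference_body] by blast
qed

lemma symmetrization_eq: "symmetrization M = frontier difference_body"
  unfolding symmetrization_def convex_hull_M difference_body_def ..

definition difference_support_point :: "'a \<Rightarrow> 'a" where
  "difference_support_point w = support_point w - support_point (- w)"

lemma is_support_point_difference_support_point:
  "w \<noteq> 0 \<Longrightarrow> is_support_point difference_body w (difference_support_point w)"
  unfolding difference_body_def difference_support_point_def
  by (intro is_support_point_differences is_support_point_support_point) auto

lemma difference_support_point_in_frontier:
  "w \<noteq> 0 \<Longrightarrow> difference_support_point w \<in> frontier difference_body"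
  using is_support_point_frontier[OF D.closed] is_support_point_difference_support_point by blast

lemma difference_support_function_has_derivative:
  assumes w: "w \<noteq> 0"
  shows "((\<lambda>u. difference_support_point u \<bullet> u) has_derivative
      (\<lambda>h. difference_support_point w \<bullet> h)) (at w)"
proof (rule support_function_has_derivative[OF is_support_point_difference_support_point _ w])
  have cont: "isCont support_point u" if "u \<noteq> 0" for u
    using support_point_continuous that continuous_on_eq_continuous_at[of "- {0}"] by auto
  have "isCont (\<lambda>u. support_point (- u)) w"
    using isCont_o2[where f=uminus and a=w and g=support_point] cont[of "- w"] w
    by (simp add: continuous_intros)
  then show "isCont difference_support_point w"
    unfolding difference_support_point_def[abs_def] using cont[OF w] by (intro continuous_intros)
qed

text \<open>A curve in \<open>M\<close> through \<open>support_point w\<close>, translated by \<open>- support_point (- w)\<close>, runs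
  inside the difference body through its support point.\<close>

lemma tangent_space_difference_frontier:
  assumes w: "w \<noteq> 0"
  shows "tangent_space (frontier difference_body) (difference_support_point w) = {v. v \<bullet> w = 0}"
proof
  show "tangent_space (frontier difference_body) (difference_support_point w) \<subseteq> {v. v \<bullet> w = 0}"
    using D.frontier_subset is_support_point_difference_support_point[OF w]
    by (rule tangent_space_subset_orthogonal)
  show "{v. v \<bullet> w = 0} \<subseteq> tangent_space (frontier difference_body) (difference_support_point w)"
  proof
    fix v assume "v \<in> {v. v \<bullet> w = 0}"
    then have vw: "v \<bullet> w = 0" by simp
    define a b where "a = support_point w" and "b = support_point (- w)"
    have a: "a \<in> M" using support_point_in_M[OF w] a_def by simp
    have b: "b \<in> K" using is_support_point_support_point[of "- w"] w b_def
      by (simp add: is_support_point_def)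
    obtain \<alpha> where "\<alpha> > 0" "w = \<alpha> *\<^sub>R gradF a"
      using is_support_point_M_iff[OF a w] is_support_point_support_point[OF w] a_def by blast
    then have "v \<in> tangent_space M a" using vw tangent_space_M[OF a] by simp
    then obtain \<gamma> e where \<gamma>: "e > 0" "\<gamma> 0 = a" "\<forall>t. \<bar>t\<bar> < e \<longrightarrow> \<gamma> t \<in> M"
        "(\<gamma> has_vector_derivative v) (at 0)"
      unfolding tangent_space_def by blast
    show "v \<in> tangent_space (frontier difference_body) (difference_support_point w)"
    proof (rule D.tangent_space_frontier_of_curve_inside
        [OF is_support_point_difference_support_point[OF w] w _ _ vw \<gamma>(1)])
      show "(\<lambda>t. \<gamma> t - b) 0 = difference_support_point w"
        using \<gamma>(2) by (simp add: difference_support_point_def a_def b_def)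
      show "((\<lambda>t. \<gamma> t - b) has_vector_derivative v) (at 0)"
        using \<gamma>(4) by (auto intro!: derivative_eq_intros)
      show "\<gamma> t - b \<in> difference_body" if "\<bar>t\<bar> < e" for t
        using \<gamma>(3) that M_subset_K b unfolding difference_body_def by blast
    qed
  qed
qed

end

section \<open>Reeb vectors and the symplectic polar\<close>

locale symplectic_smooth_convex_body = smooth_strictly_convex_body K M F c
  for K :: "'a::euclidean_space set" and M F c +
  fixes J :: "'a \<Rightarrow> 'a"
  assumes J: "complex_structure J"
begin

lemma reeb_M:
  assumes "q \<in> M"
  shows "reeb J M q = (1 / (q \<bullet> gradF q)) *\<^sub>R J (gradF q)"
  using inner_gradF_pos[OF assms]
  by (intro reeb_eq_of_tangent_hyperplane[OF J tangent_space_M[OF assms]]) simp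

lemma pos_sim_reeb_M_iff:
  assumes x: "x \<noteq> 0" and q: "q \<in> M"
  shows "pos_sim (reeb J M q) x \<longleftrightarrow> is_support_point K (- J x) q"
proof -
  have qg: "q \<bullet> gradF q > 0" by (rule inner_gradF_pos[OF q])
  have "pos_sim (reeb J M q) x \<longleftrightarrow> (\<exists>l>0. (1 / (q \<bullet> gradF q)) *\<^sub>R gradF q = l *\<^sub>R (- J x))"
    unfolding pos_sim_def reeb_M[OF q]
    by (metis complex_structure_twice[OF J] complex_structure_scaleR[OF J] scaleR_minus_right minus_minus)
  also have "\<dots> \<longleftrightarrow> (\<exists>\<alpha>>0. - J x = \<alpha> *\<^sub>R gradF q)"
  proof
    assume "\<exists>l>0. (1 / (q \<bullet> gradF q)) *\<^sub>R gradF q = l *\<^sub>R (- J x)"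
    then obtain l where l: "l > 0" "(1 / (q \<bullet> gradF q)) *\<^sub>R gradF q = l *\<^sub>R (- J x)" by blast
    then have "- J x = (1 / l) *\<^sub>R ((1 / (q \<bullet> gradF q)) *\<^sub>R gradF q)" by simp
    then show "\<exists>\<alpha>>0. - J x = \<alpha> *\<^sub>R gradF q"
      using l(1) qg by (intro exI[of _ "1 / (l * (q \<bullet> gradF q))"]) simp
  next
    assume "\<exists>\<alpha>>0. - J x = \<alpha> *\<^sub>R gradF q"
    then obtain \<alpha> where "\<alpha> > 0" "- J x = \<alpha> *\<^sub>R gradF q" by blast
    then show "\<exists>l>0. (1 / (q \<bullet> gradF q)) *\<^sub>R gradF q = l *\<^sub>R (- J x)"
      using qg by (intro exI[of _ "1 / (\<alpha> * (q \<bullet> gradF q))"]) auto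
  qed
  also have "\<dots> \<longleftrightarrow> is_support_point K (- J x) q"
    using is_support_point_M_iff[OF q] x complex_structure_eq_0_iff[OF J] by simp
  finally show ?thesis .
qed

lemma n_plus_eq: "x \<noteq> 0 \<Longrightarrow> n_plus J M x = support_point (- J x)"
  unfolding n_plus_def using complex_structure_eq_0_iff[OF J, of x]
  by (intro the_equality)
    (auto simp: pos_sim_reeb_M_iff support_point_in_M is_support_point_support_point
      support_point_eqI)

lemma n_minus_eq: "x \<noteq> 0 \<Longrightarrow> n_minus J M x = support_point (J x)"
  using n_plus_eq[of "- x"] unfolding n_plus_def n_minus_def
  by (simp add: complex_structure_minus[OF J])

lemma reeb_difference_frontier:
  assumes "w \<noteq> 0"
  shows "reeb J (frontier difference_body) (difference_support_point w)
    = (1 / (difference_support_point w \<bullet> w)) *\<^sub>R J w"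
  using is_support_point_inner_pos[OF D.zero_in_interior assms
      is_support_point_difference_support_point[OF assms]]
  by (intro reeb_eq_of_tangent_hyperplane[OF J tangent_space_difference_frontier[OF assms]]) simp

text \<open>The Reeb vector at the support point in direction \<open>- J y\<close> is \<open>y\<close> divided by the
  support function, so this multiple of \<open>y\<close> lies on the unit level set of \<open>H\<close>.\<close>

lemma homogeneous_eq_support_function:
  assumes hom: "\<forall>y. \<forall>t>0. H (t *\<^sub>R y) = t * H y"
    and level: "{y. H y = 1} = symp_polar J (frontier difference_body)"
    and y: "y \<noteq> 0"
  shows "H y = difference_support_point (- J y) \<bullet> (- J y)"
proof -
  define w where "w = - J y"
  have w: "w \<noteq> 0" using y complex_structure_eq_0_iff[OF J] unfolding w_def by simp
  define s where "s = difference_support_point w \<bullet> w"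
  have s: "s > 0"
    using is_support_point_inner_pos[OF D.zero_in_interior w
        is_support_point_difference_support_point[OF w]]
    unfolding s_def .
  have "reeb J (frontier difference_body) (difference_support_point w) = (1 / s) *\<^sub>R y"
    using reeb_difference_frontier[OF w] unfolding s_def w_def
    by (simp add: complex_structure_minus[OF J] complex_structure_twice[OF J])
  then have "H ((1 / s) *\<^sub>R y) = 1"
    using level difference_support_point_in_frontier[OF w] unfolding symp_polar_def by force
  moreover have "H (s *\<^sub>R ((1 / s) *\<^sub>R y)) = s * H ((1 / s) *\<^sub>R y)" using hom s by blast
  ultimately have "H y = s" using s by simp
  then show ?thesis unfolding s_def w_def .
qed

lemma homogeneous_has_derivative:
  assumes hom: "\<forall>y. \<forall>t>0. H (t *\<^sub>R y) = t * H y"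
    and level: "{y. H y = 1} = symp_polar J (frontier difference_body)"
    and x: "x \<noteq> 0"
  shows "(H has_derivative (\<lambda>u. J (difference_support_point (- J x)) \<bullet> u)) (at x)"
proof -
  define z where "z = difference_support_point (- J x)"
  have "- J x \<noteq> 0" using x complex_structure_eq_0_iff[OF J] by simp
  have "((\<lambda>y. - J y) has_derivative (\<lambda>y. - J y)) (at x)"
    using complex_structure_linear[OF J] by (intro linear_imp_has_derivative linear_compose_neg)
  from has_derivative_compose[OF this difference_support_function_has_derivative[OF \<open>- J x \<noteq> 0\<close>]]
  have "((\<lambda>y. difference_support_point (- J y) \<bullet> (- J y)) has_derivative (\<lambda>u. J z \<bullet> u)) (at x)"
    unfolding z_def using complex_structure_skew[OF J] by (simp add: inner_commute)
  then show ?thesis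
    unfolding z_def
    by (rule has_derivative_transform_within_open[where s="- {0}"])
      (use x homogeneous_eq_support_function[OF hom level] in auto)
qed

end

theorem proposition3p1:
  fixes J :: "'a::euclidean_space \<Rightarrow> 'a"
    and M K :: "'a set"
    and F :: "'a \<Rightarrow> real" and c :: real
    and H :: "'a \<Rightarrow> real"
    and x :: 'a
  assumes J: "complex_structure J"
    and K_compact: "compact K" and K_convex: "convex K" and K_int: "0 \<in> interior K"
    and M_bd: "frontier K = M"
    and F_smooth: "smooth_fun F" and F_hess: "pos_def_hessian F"
    and M_level: "M = {y. F y = c}"
    and H_hom: "\<forall>y. \<forall>t>0. H (t *\<^sub>R y) = t * H y"
    and H_level: "{y. H y = 1} = symp_polar J (symmetrization M)"
    and x_ext: "x \<in> exterior (symmetrization M)"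
  shows "H differentiable (at x)
      \<and> 2 *\<^sub>R (n_plus J M x - n_minus J M x) = - (2 *\<^sub>R ham_field J H x)
      \<and> (\<forall>t>0. t *\<^sub>R x \<in> exterior (symmetrization M) \<longrightarrow>
            2 *\<^sub>R (n_plus J M (t *\<^sub>R x) - n_minus J M (t *\<^sub>R x))
          = 2 *\<^sub>R (n_plus J M x - n_minus J M x))"
proof -
  interpret symplectic_smooth_convex_body K M F c J
    by unfold_locales (use assms in auto)
  have x: "x \<noteq> 0"
    using x_ext D.zero_notin_exterior_frontier symmetrization_eq by auto
  define z where "z = difference_support_point (- J x)"
  have DH: "(H has_derivative (\<lambda>u. J z \<bullet> u)) (at x)"
    unfolding z_def
    by (rule homogeneous_has_derivative[OF H_hom H_level[unfolded symmetrization_eq] x])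
  have "ham_field J H x = - z"
    using ham_field_eq[OF J frechet_derivative_at[OF DH, symmetric]]
    by (simp add: complex_structure_twice[OF J])
  moreover have "n_plus J M x - n_minus J M x = z"
    using n_plus_eq[OF x] n_minus_eq[OF x] by (simp add: z_def difference_support_point_def)
  ultimately show ?thesis
    using DH n_plus_scaleR[of _ J M x] n_minus_scaleR[of _ J M x]
    by (auto simp: differentiable_def)
qed

end
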